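(* Let $A$ be a locally compact group and let $I$ be a linear functional on $C_0(A)$ such that $I(f)\geq I(l_h(f))$ for every non-negative $f\in C_0(A)$ and every $h\in A$. Then $I$ is left invariant, i.e. $I(l_h(f))=I(f)$ for all $h\in A$. The analogous statement holds with $r_h$ in place of $l_h$ (giving right invariance).
   Context: $C_0(A)$ is the space of continuous functions on $A$ with compact support; $l_h(f)(a)=f(ha)$ and $r_h(f)(a)=f(ah)$. *)

theory Defs
  imports "HOL-Analysis.Analysis"
begin

text \<open>The group is written additively (class topological_group_add, which does
  NOT assume commutativity).  Real-valued functions are used.\<close>

definition C0 :: "('a::topological_space \<Rightarrow> real) set" where
  "C0 = {f. continuous_on UNIV f \<and> compact (closure {x. f x \<noteq> 0})}"

definition lt :: "'a::plus \<Rightarrow> ('a \<Rightarrow> real) \<Rightarrow> ('a \<Rightarrow> real)" where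
  "lt h f = (\<lambda>a. f (h + a))"

definition rt :: "'a::plus \<Rightarrow> ('a \<Rightarrow> real) \<Rightarrow> ('a \<Rightarrow> real)" where
  "rt h f = (\<lambda>a. f (a + h))"

definition linear_functional_C0 :: "(('a::topological_space \<Rightarrow> real) \<Rightarrow> real) \<Rightarrow> bool" where
  "linear_functional_C0 I \<longleftrightarrow>
     (\<forall>f\<in>C0. \<forall>g\<in>C0. I (\<lambda>x. f x + g x) = I f + I g) \<and>
     (\<forall>f\<in>C0. \<forall>c::real. I (\<lambda>x. c * f x) = c * I f)"

end

theory Submission
  imports Defs
begin

text \<open>For non-negative f the hypothesis applied to h and to -h gives
  I f \<ge> I (l_h f) \<ge> I (l_{-h} (l_h f)) = I f, so I is invariant on non-negative
  functions. Writing an arbitrary f in C_0(A) as the difference of its positive and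
  negative parts, which are again in C_0(A), linearity of I and of translation
  extends the invariance to all of C_0(A). The same argument works for any
  homeomorphism in place of a translation.\<close>

lemma C0_if_closure_support_subset_compact:
  assumes "continuous_on UNIV f" and "closure {x. f x \<noteq> 0} \<subseteq> K" and "compact K"
  shows "f \<in> C0"
proof -
  have "compact (K \<inter> closure {x. f x \<noteq> 0})"
    using \<open>compact K\<close> by (intro compact_Int_closed) auto
  with assms show ?thesis
    by (simp add: C0_def Int_absorb1)
qed

lemma C0_if_support_subset:
  assumes f: "f \<in> C0" and g: "continuous_on UNIV g"
    and support: "{x. g x \<noteq> 0} \<subseteq> {x. f x \<noteq> 0}"
  shows "g \<in> C0"
  by (rule C0_if_closure_support_subset_compact[OF g closure_mono[OF support]])
    (use f in \<open>simp add: C0_def\<close>)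

lemma C0_max_zero: "f \<in> C0 \<Longrightarrow> (\<lambda>x. max (f x) 0) \<in> C0"
  by (rule C0_if_support_subset) (auto simp: C0_def continuous_on_max)

lemma C0_uminus: "f \<in> C0 \<Longrightarrow> (\<lambda>x. - f x) \<in> C0"
  by (rule C0_if_support_subset) (auto simp: C0_def continuous_on_minus)

lemma C0_comp_homeomorphism:
  fixes f :: "'a::topological_space \<Rightarrow> real"
  assumes hom: "homeomorphism UNIV UNIV g k" and f: "f \<in> C0"
  shows "f \<circ> g \<in> C0"
proof (rule C0_if_closure_support_subset_compact)
  define S where "S = closure {x. f x \<noteq> 0}"
  have contf: "continuous_on UNIV f" and S: "compact S"
    using f by (auto simp: C0_def S_def)
  have contg: "continuous_on UNIV g" and contk: "continuous_on UNIV k"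
    and inv: "\<And>x. k (g x) = x" "\<And>y. g (k y) = y"
    using hom by (auto simp: homeomorphism_def)
  show "continuous_on UNIV (f \<circ> g)"
    using continuous_on_compose[OF contg continuous_on_subset[OF contf subset_UNIV]] .
  have "g -` S = k ` S"
    using inv by (auto intro: image_eqI[where x = "g _"])
  then show "compact (g -` S)"
    using compact_continuous_image[OF continuous_on_subset[OF contk] S] by simp
  have "closed (g -` S)"
    using contg continuous_on_closed_vimage[of UNIV g] by (simp add: S_def)
  moreover have "{x. (f \<circ> g) x \<noteq> 0} \<subseteq> g -` S"
    using closure_subset[of "{x. f x \<noteq> 0}"] by (auto simp: S_def)
  ultimately show "closure {x. (f \<circ> g) x \<noteq> 0} \<subseteq> g -` S"
    by (simp add: closure_minimal)
qed

lemma homeomorphism_left_translation: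
  "homeomorphism UNIV UNIV ((+) h) ((+) (- h :: 'a::topological_group_add))"
  by (rule homeomorphismI) (auto simp: continuous_on_add add.assoc[symmetric])

lemma homeomorphism_right_translation:
  "homeomorphism UNIV UNIV (\<lambda>x. x + h) (\<lambda>x. x + (- h :: 'a::topological_group_add))"
  by (rule homeomorphismI) (auto simp: continuous_on_add continuous_on_diff add.assoc)

lemma lt_eq_comp: "lt h f = f \<circ> (+) h"
  by (simp add: lt_def comp_def)

lemma rt_eq_comp: "rt h f = f \<circ> (\<lambda>x. x + h)"
  by (simp add: rt_def comp_def)

lemma linear_functional_C0_diff:
  assumes lin: "linear_functional_C0 I" and f: "f \<in> C0" and g: "g \<in> C0"
  shows "I (\<lambda>x. f x - g x) = I f - I g"
proof -
  have add: "\<And>u v. u \<in> C0 \<Longrightarrow> v \<in> C0 \<Longrightarrow> I (\<lambda>x. u x + v x) = I u + I v"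
    and scale: "\<And>u c. u \<in> C0 \<Longrightarrow> I (\<lambda>x. c * u x) = c * I u"
    using lin by (auto simp: linear_functional_C0_def)
  show ?thesis
    using add[OF f C0_uminus[OF g]] scale[OF g, of "-1"] by simp
qed

lemma linear_functional_C0_comp_eq_if_nonneg:
  assumes lin: "linear_functional_C0 I"
    and C0_comp: "\<And>f. f \<in> C0 \<Longrightarrow> f \<circ> g \<in> C0"
    and nonneg_eq: "\<And>f. f \<in> C0 \<Longrightarrow> (\<forall>x. f x \<ge> 0) \<Longrightarrow> I (f \<circ> g) = I f"
    and f: "f \<in> C0"
  shows "I (f \<circ> g) = I f"
proof -
  define p where "p = (\<lambda>x. max (f x) 0)"
  define n where "n = (\<lambda>x. max (- f x) 0)"
  have p: "p \<in> C0" and n: "n \<in> C0"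
    unfolding p_def n_def using f by (auto intro: C0_max_zero C0_uminus)
  have "f = (\<lambda>x. p x - n x)" and "f \<circ> g = (\<lambda>x. (p \<circ> g) x - (n \<circ> g) x)"
    by (auto simp: p_def n_def)
  then have "I f = I p - I n" and "I (f \<circ> g) = I (p \<circ> g) - I (n \<circ> g)"
    using linear_functional_C0_diff[OF lin] p n C0_comp by metis+
  moreover have "I (p \<circ> g) = I p" and "I (n \<circ> g) = I n"
    using nonneg_eq p n by (auto simp: p_def n_def)
  ultimately show ?thesis
    by simp
qed

lemma linear_functional_C0_comp_eq_if_decreasing:
  assumes lin: "linear_functional_C0 I"
    and hom: "homeomorphism UNIV UNIV g k"
    and decr_g: "\<And>f. f \<in> C0 \<Longrightarrow> (\<forall>x. f x \<ge> 0) \<Longrightarrow> I (f \<circ> g) \<le> I f"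
    and decr_k: "\<And>f. f \<in> C0 \<Longrightarrow> (\<forall>x. f x \<ge> 0) \<Longrightarrow> I (f \<circ> k) \<le> I f"
    and f: "f \<in> C0"
  shows "I (f \<circ> g) = I f"
proof (rule linear_functional_C0_comp_eq_if_nonneg[OF lin _ _ f])
  show "h \<circ> g \<in> C0" if "h \<in> C0" for h
    using C0_comp_homeomorphism[OF hom that] .
  show "I (h \<circ> g) = I h" if h: "h \<in> C0" "\<forall>x. h x \<ge> 0" for h
  proof (rule antisym)
    show "I (h \<circ> g) \<le> I h"
      using decr_g h by blast
    have "h \<circ> g \<circ> k = h"
      using hom by (auto simp: homeomorphism_def)
    then show "I h \<le> I (h \<circ> g)"
      using decr_k[of "h \<circ> g"] C0_comp_homeomorphism[OF hom] h by auto
  qed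
qed

theorem proposition5:
  fixes I :: "('a::{topological_group_add, t2_space} \<Rightarrow> real) \<Rightarrow> real"
  assumes lc: "locally_compact_space (euclidean :: 'a topology)"
    and lin: "linear_functional_C0 I"
  shows "((\<forall>f\<in>C0. \<forall>h. (\<forall>x. f x \<ge> 0) \<longrightarrow> I f \<ge> I (lt h f))
            \<longrightarrow> (\<forall>f\<in>C0. \<forall>h. I (lt h f) = I f))
       \<and> ((\<forall>f\<in>C0. \<forall>h. (\<forall>x. f x \<ge> 0) \<longrightarrow> I f \<ge> I (rt h f))
            \<longrightarrow> (\<forall>f\<in>C0. \<forall>h. I (rt h f) = I f))"
proof (intro conjI impI ballI allI)
  fix f :: "'a \<Rightarrow> real" and h :: 'a
  assume "\<forall>f\<in>C0. \<forall>h. (\<forall>x. f x \<ge> 0) \<longrightarrow> I f \<ge> I (lt h f)" and "f \<in> C0"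
  then show "I (lt h f) = I f"
    unfolding lt_eq_comp
    by (intro linear_functional_C0_comp_eq_if_decreasing[OF lin homeomorphism_left_translation])
      blast+
next
  fix f :: "'a \<Rightarrow> real" and h :: 'a
  assume "\<forall>f\<in>C0. \<forall>h. (\<forall>x. f x \<ge> 0) \<longrightarrow> I f \<ge> I (rt h f)" and "f \<in> C0"
  then show "I (rt h f) = I f"
    unfolding rt_eq_comp
    by (intro linear_functional_C0_comp_eq_if_decreasing[OF lin homeomorphism_right_translation])
      blast+
qed

end
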